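(* Let $\mathcal{P}=(\{\mathcal{E}_k:k\in K\},\{M_0,M_1\})$ be a concurrent quantum program on a Hilbert space $\mathcal{H}$ of finite dimension $d$, and let $\rho_0$ be an initial density operator. Then the reachable space satisfies $$\mathcal{H}_R=\operatorname{supp}\Big(\sum_{i=0}^{d-1}\mathcal{F}^i(\rho_0)\Big),\qquad\text{where }\mathcal{F}=\sum_{k\in K}\mathcal{F}_k .$$
   Context: $\mathcal{H}$ is a complex Hilbert space of finite dimension $d\ge 1$. A super-operator on $\mathcal{H}$ is a completely positive linear map $\mathcal{E}$ on the space of linear operators on $\mathcal{H}$ with $\operatorname{tr}\mathcal{E}(\rho)\le\operatorname{tr}\rho$ for all positive $\rho$; it is trace-preserving if equality always holds. For a positive semidefinite operator $\rho$, $\operatorname{supp}(\rho)$ is the subspace spanned by the eigenvectors of $\rho$ with nonzero eigenvalues. A concurrent quantum program is a pair $\mathcal{P}=(\{\mathcal{E}_k:k\in K\},\{M_0,M_1\})$ where $K=\{1,\dots,m\}$, each $\mathcal{E}_k$ is a trace-preserving super-operator on $\mathcal{H}$, and $M_0,M_1$ are operators on $\mathcal{H}$ with $M_0^\dagger M_0+M_1^\dagger M_1=I$ (the termination measurement). For $k\in K$ define the super-operator $\mathcal{F}_k(\rho)=\mathcal{E}_k(M_1\rho M_1^\dagger)$. $S_{fin}=K^*$ is the set of finite strings over $K$; for $f=s_1s_2\cdots s_n\in S_{fin}$ put $\mathcal{F}_f=\mathcal{F}_{s_n}\circ\cdots\circ\mathcal{F}_{s_1}$ (the identity map for the empty string).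 $\mathcal{F}^i$ denotes the $i$-fold composition of $\mathcal{F}$ ($\mathcal{F}^0$ the identity). The reachable space of $\mathcal{P}$ from $\rho_0$ is $\mathcal{H}_R=\bigvee_{f\in S_{fin}}\operatorname{supp}\mathcal{F}_f(\rho_0)$, where $\bigvee$ denotes the span of the union of the subspaces. *)

theory Defs
  imports "HOL-Analysis.Analysis"
begin

text \<open>Operators on a d-dimensional Hilbert space H = complex^'n (d = CARD('n)) are
  complex d x d matrices.\<close>

type_synonym 'n qop = "complex^'n^'n"

definition adj :: "'n::finite qop \<Rightarrow> 'n qop" where
  "adj A = (\<chi> i j. cnj (A $ j $ i))"

definition tr :: "'n::finite qop \<Rightarrow> complex" where
  "tr A = (\<Sum>i\<in>UNIV. A $ i $ i)"

definition msc :: "complex \<Rightarrow> 'n::finite qop \<Rightarrow> 'n qop" where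
  "msc c A = (\<chi> i j. c * A $ i $ j)"

definition qform :: "'n::finite qop \<Rightarrow> complex^'n \<Rightarrow> complex" where
  "qform A v = (\<Sum>i\<in>UNIV. cnj (v $ i) * (A *v v) $ i)"

definition psd :: "'n::finite qop \<Rightarrow> bool" where
  "psd A \<longleftrightarrow> (\<forall>v. Im (qform A v) = 0 \<and> Re (qform A v) \<ge> 0)"

text \<open>Positivity of an (n d) x (n d) matrix given as an n x n array of d x d blocks
  X i j (i, j < n).\<close>
definition block_psd :: "nat \<Rightarrow> (nat \<Rightarrow> nat \<Rightarrow> 'n::finite qop) \<Rightarrow> bool" where
  "block_psd n X \<longleftrightarrow> (\<forall>v :: nat \<Rightarrow> complex^'n.
     (let q = (\<Sum>i<n. \<Sum>j<n. \<Sum>a\<in>UNIV. cnj (v i $ a) * (X i j *v v j) $ a)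
      in Im q = 0 \<and> Re q \<ge> 0))"

definition clinear_map :: "('n::finite qop \<Rightarrow> 'n qop) \<Rightarrow> bool" where
  "clinear_map E \<longleftrightarrow> (\<forall>A B c. E (A + B) = E A + E B \<and> E (msc c A) = msc c (E A))"

text \<open>Complete positivity: id_n \<otimes> E is positive for every n (applied blockwise).\<close>
definition completely_positive :: "('n::finite qop \<Rightarrow> 'n qop) \<Rightarrow> bool" where
  "completely_positive E \<longleftrightarrow>
     (\<forall>n X. block_psd n X \<longrightarrow> block_psd n (\<lambda>i j. E (X i j)))"

definition super_operator :: "('n::finite qop \<Rightarrow> 'n qop) \<Rightarrow> bool" where
  "super_operator E \<longleftrightarrow> clinear_map E \<and> completely_positive E \<and>
     (\<forall>\<rho>. psd \<rho> \<longrightarrow> Re (tr (E \<rho>)) \<le> Re (tr \<rho>))"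

definition trace_preserving :: "('n::finite qop \<Rightarrow> 'n qop) \<Rightarrow> bool" where
  "trace_preserving E \<longleftrightarrow> (\<forall>\<rho>. psd \<rho> \<longrightarrow> tr (E \<rho>) = tr \<rho>)"

definition cspan :: "(complex^'n::finite) set \<Rightarrow> (complex^'n) set" where
  "cspan S = {x. \<exists>T c. finite T \<and> T \<subseteq> S \<and> x = (\<Sum>v\<in>T. c v *s v)}"

definition supp :: "'n::finite qop \<Rightarrow> (complex^'n) set" where
  "supp \<rho> = cspan {v. v \<noteq> 0 \<and> (\<exists>c. c \<noteq> 0 \<and> \<rho> *v v = c *s v)}"

definition Fk :: "(nat \<Rightarrow> 'n::finite qop \<Rightarrow> 'n qop) \<Rightarrow> 'n qop \<Rightarrow> nat \<Rightarrow> 'n qop \<Rightarrow> 'n qop" where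
  "Fk E M1 k \<rho> = E k (M1 ** \<rho> ** adj M1)"

text \<open>F_f for f = s1 s2 ... sn is F_sn o ... o F_s1 (s1 applied first).\<close>
definition Fstr :: "(nat \<Rightarrow> 'n::finite qop \<Rightarrow> 'n qop) \<Rightarrow> 'n qop \<Rightarrow> nat list \<Rightarrow> 'n qop \<Rightarrow> 'n qop" where
  "Fstr E M1 f \<rho> = fold (\<lambda>k r. Fk E M1 k r) f \<rho>"

definition Fsum :: "nat \<Rightarrow> (nat \<Rightarrow> 'n::finite qop \<Rightarrow> 'n qop) \<Rightarrow> 'n qop \<Rightarrow> 'n qop \<Rightarrow> 'n qop" where
  "Fsum m E M1 \<rho> = (\<Sum>k\<in>{1..m}. Fk E M1 k \<rho>)"

definition reachable_space :: "nat \<Rightarrow> (nat \<Rightarrow> 'n::finite qop \<Rightarrow> 'n qop) \<Rightarrow> 'n qop \<Rightarrow> 'n qop \<Rightarrow> (complex^'n) set" where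
  "reachable_space m E M1 \<rho>0 = cspan (\<Union>f\<in>lists {1..m}. supp (Fstr E M1 f \<rho>0))"

end

theory Submission
  imports Defs
begin

text \<open>
  All operators that occur are positive semidefinite (psd), and for psd X the support
  supp X (span of the eigenvectors with nonzero eigenvalue) is the range of X, which is the
  orthogonal complement of the null space of X.  Supports can therefore be compared through null
  spaces, which behave well: the null space of a sum of psd operators is the intersection of their
  null spaces, and a positive linear map preserves inclusions between null spaces, since a kernel
  inclusion N \<tau> \<subseteq> N \<sigma> yields a domination \<sigma> \<le> c \<tau>.

  With T j = \<Sum>i\<le>j. F^i(\<rho>0) we have T (j+1) = \<rho>0 + F (T j), so the null spaces of the T j form a
  decreasing chain that is constant as soon as it stops decreasing; a dimension count (\<rho>0 \<noteq> 0)
  shows it is constant from j = d - 1 on.  A word f of length i satisfies N(F^i \<rho>0) \<subseteq> N(F_f \<rho>0),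
  which gives H_R \<subseteq> supp (T (d-1)); conversely T (d-1) is a finite sum of operators F_f(\<rho>0), so its
  range lies in H_R.
\<close>

text \<open>The real inner product \<open>v \<bullet> w\<close> on complex^n is Re \<langle>v, w\<rangle>; the imaginary part of
  \<langle>v, w\<rangle> is \<open>iscale v \<bullet> w\<close>.\<close>

abbreviation iscale :: "complex^'n::finite \<Rightarrow> complex^'n" where
  "iscale x \<equiv> \<i> *s x"

lemma inner_iscale_iscale: "iscale a \<bullet> iscale (b::complex^'n::finite) = a \<bullet> b"
  by (simp add: inner_vec_def inner_complex_def algebra_simps)

lemma iscale_iscale: "iscale (iscale (a::complex^'n::finite)) = - a"
  by (simp add: vec_eq_iff)

lemma matrix_vector_mult_cscale: "(A::complex^'n::finite^'n) *v (c *s x) = c *s (A *v x)"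
  by (rule vec.scale)

lemma scaleR_eq_cscale: "r *\<^sub>R (x::complex^'n::finite) = complex_of_real r *s x"
  by (simp add: vec_eq_iff scaleR_conv_of_real[where 'a=complex])

lemma matrix_vector_mult_cscaleR: "(A::complex^'n::finite^'n) *v (r *\<^sub>R x) = r *\<^sub>R (A *v x)"
  by (simp add: scaleR_eq_cscale matrix_vector_mult_cscale)

lemma Re_qform: "Re (qform A v) = v \<bullet> (A *v v)"
  by (simp add: qform_def inner_vec_def inner_complex_def)

lemma Im_qform: "Im (qform A v) = iscale v \<bullet> (A *v v)"
  by (simp add: qform_def inner_vec_def inner_complex_def algebra_simps)

lemma psd_iff_inner: "psd A \<longleftrightarrow> (\<forall>v. iscale v \<bullet> (A *v v) = 0 \<and> 0 \<le> v \<bullet> (A *v v))"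
  by (simp add: psd_def Re_qform Im_qform)

text \<open>A psd matrix is self-adjoint (by polarisation of the vanishing imaginary part).\<close>
lemma psd_self_adjoint:
  assumes "psd A"
  shows "(A *v x) \<bullet> y = x \<bullet> (A *v y)"
proof -
  have im0: "iscale v \<bullet> (A *v v) = 0" for v
    using assms by (simp add: psd_iff_inner)
  have polar: "iscale x \<bullet> (A *v y) + iscale y \<bullet> (A *v x) = 0" for x y
    using im0[of "x + y"] im0[of x] im0[of y]
    by (simp add: vector_add_ldistrib matrix_vector_right_distrib inner_add_left inner_add_right)
  have "- (x \<bullet> (A *v y)) + y \<bullet> (A *v x) = 0"
    using polar[of "iscale x" y] by (simp add: iscale_iscale matrix_vector_mult_cscale inner_iscale_iscale)
  then show ?thesis by (simp add: inner_commute)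
qed

text \<open>A nonnegative real quadratic 2at + bt^2 has no linear term; the basis of all variational arguments.\<close>
lemma nonneg_quadratic_imp_linear_coeff_zero:
  fixes a b :: real
  assumes "b \<ge> 0" "\<And>t. 0 \<le> 2*t*a + t^2*b"
  shows "a = 0"
proof -
  define t where "t = - a/(b+1)"
  have tb: "t*(b+1) = -a" using assms(1) by (simp add: t_def)
  have "0 \<le> (2*t*a + t^2*b) * (b+1)^2" using assms by simp
  also have "(2*t*a + t^2*b) * (b+1)^2 = 2*a*(t*(b+1))*(b+1) + (t*(b+1))^2*b"
    by (simp add: power2_eq_square algebra_simps)
  also have "\<dots> = 2*a*(-a)*(b+1) + (-a)^2*b" by (simp only: tb)
  also have "\<dots> = - (a^2 * (b + 2))" by (simp add: power2_eq_square algebra_simps)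
  finally have "a^2 * (b+2) \<le> 0" by simp
  then show ?thesis using assms(1) by (simp add: mult_le_0_iff)
qed

lemma psd_quadratic_expand:
  assumes "psd A"
  shows "(v + t *\<^sub>R w) \<bullet> (A *v (v + t *\<^sub>R w)) =
     v \<bullet> (A *v v) + 2*t*(w \<bullet> (A *v v)) + t^2 * (w \<bullet> (A *v w))"
proof -
  have "v \<bullet> (A *v w) = w \<bullet> (A *v v)"
    using psd_self_adjoint[OF assms, of w v] by (simp add: inner_commute)
  then show ?thesis
    by (simp add: matrix_vector_right_distrib matrix_vector_mult_cscaleR inner_add_left
        inner_add_right power2_eq_square algebra_simps)
qed

lemma psd_form_zero_imp_kernel:
  assumes "psd A" "v \<bullet> (A *v v) = 0"
  shows "A *v v = 0"
proof -
  let ?w = "A *v v"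
  have pos: "0 \<le> x \<bullet> (A *v x)" for x using assms(1) by (simp add: psd_iff_inner)
  have "?w \<bullet> ?w = 0"
  proof (rule nonneg_quadratic_imp_linear_coeff_zero)
    show "0 \<le> ?w \<bullet> (A *v ?w)" by (rule pos)
    show "0 \<le> 2*t*(?w \<bullet> ?w) + t^2 * (?w \<bullet> (A *v ?w))" for t
      using pos[of "v + t *\<^sub>R ?w"] psd_quadratic_expand[OF assms(1), of v t ?w] assms(2) by simp
  qed
  then show ?thesis by simp
qed

definition nullspace :: "complex^'n::finite^'n \<Rightarrow> (complex^'n) set" where
  "nullspace X = {v. X *v v = 0}"

lemma nullspace_subspace: "vec.subspace (nullspace X)"
  unfolding nullspace_def by (rule vec.subspace_kernel)

lemma vec_subspace_imp_subspace: "vec.subspace (W::(complex^'n::finite) set) \<Longrightarrow> subspace W"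
  unfolding subspace_def vec.subspace_def by (simp add: scaleR_eq_cscale)

lemma psd_zero: "psd (0::'n::finite qop)"
  by (simp add: psd_iff_inner)

lemma psd_add: "psd A \<Longrightarrow> psd B \<Longrightarrow> psd (A + B)"
  by (simp add: psd_iff_inner matrix_vector_mult_add_rdistrib inner_add_right)

lemma psd_sum: "finite K \<Longrightarrow> (\<And>k. k \<in> K \<Longrightarrow> psd (A k)) \<Longrightarrow> psd (\<Sum>k\<in>K. A k)"
  by (induction K rule: finite_induct) (auto simp: psd_add psd_zero)

lemma nullspace_psd_add:
  assumes "psd A" "psd B"
  shows "nullspace (A + B) = nullspace A \<inter> nullspace B"
proof
  show "nullspace A \<inter> nullspace B \<subseteq> nullspace (A + B)"
    by (auto simp: nullspace_def matrix_vector_mult_add_rdistrib)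
  show "nullspace (A + B) \<subseteq> nullspace A \<inter> nullspace B"
  proof
    fix v assume "v \<in> nullspace (A + B)"
    then have "v \<bullet> (A *v v) + v \<bullet> (B *v v) = 0"
      by (simp add: nullspace_def matrix_vector_mult_add_rdistrib flip: inner_add_right)
    moreover have "0 \<le> v \<bullet> (A *v v)" "0 \<le> v \<bullet> (B *v v)"
      using assms by (auto simp: psd_iff_inner)
    ultimately have "v \<bullet> (A *v v) = 0" "v \<bullet> (B *v v) = 0" by linarith+
    then show "v \<in> nullspace A \<inter> nullspace B"
      using psd_form_zero_imp_kernel assms by (auto simp: nullspace_def)
  qed
qed

lemma nullspace_psd_sum_subset:
  assumes "finite K" "\<And>k. k \<in> K \<Longrightarrow> psd (A k)" "k \<in> K"
  shows "nullspace (\<Sum>k\<in>K. A k) \<subseteq> nullspace (A k)"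
proof -
  have "(\<Sum>k\<in>K. A k) = A k + (\<Sum>k\<in>K-{k}. A k)"
    using assms by (simp add: sum.remove)
  moreover have "psd (\<Sum>k\<in>K-{k}. A k)" using assms by (intro psd_sum) auto
  ultimately show ?thesis using nullspace_psd_add assms by auto
qed

lemma range_psd_eq_orthogonal_nullspace:
  assumes "psd A"
  shows "range ((*v) A) = (nullspace A)\<^sup>\<bottom>"
proof -
  have lin: "linear ((*v) A)" by simp
  have "adjoint ((*v) A) = (*v) A"
    by (rule adjoint_unique) (simp add: psd_self_adjoint[OF assms])
  then have "nullspace A = (range ((*v) A))\<^sup>\<bottom>"
    using ker_orthogonal_comp_adjoint[OF lin] by (auto simp: nullspace_def)
  moreover have "subspace (range ((*v) A))"
    using lin linear_subspace_image subspace_UNIV by blast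
  ultimately show ?thesis by (simp add: orthogonal_comp_self)
qed

lemma quadratic_form_scaleR:
  "(c *\<^sub>R x) \<bullet> ((A::complex^'n::finite^'n) *v (c *\<^sub>R x)) = c^2 * (x \<bullet> (A *v x))"
  by (simp add: matrix_vector_mult_cscaleR power2_eq_square)

text \<open>By compactness of the unit sphere, the quadratic form of any matrix attains its maximum
  on the unit sphere of a nonzero subspace; by homogeneity this bounds it on the whole subspace.\<close>
lemma quadratic_form_max_on_subspace:
  fixes A :: "complex^'n::finite^'n"
  assumes "subspace U" "z \<in> U" "z \<noteq> 0"
  obtains x0 where "x0 \<in> U" "norm x0 = 1"
    "\<And>u. u \<in> U \<Longrightarrow> u \<bullet> (A *v u) \<le> (x0 \<bullet> (A *v x0)) * (u \<bullet> u)"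
proof -
  define S where "S = U \<inter> sphere 0 1"
  have "compact S" unfolding S_def
    by (intro closed_Int_compact closed_subspace assms compact_sphere)
  moreover have "(1 / norm z) *\<^sub>R z \<in> S"
    using assms by (simp add: S_def subspace_scale)
  moreover have "continuous_on S (\<lambda>x. x \<bullet> (A *v x))"
    by (intro continuous_intros linear_continuous_on matrix_vector_mul_bounded_linear)
  ultimately obtain x0 where x0: "x0 \<in> S" and max: "\<And>y. y \<in> S \<Longrightarrow> y \<bullet> (A *v y) \<le> x0 \<bullet> (A *v x0)"
    using continuous_attains_sup[of S] by blast
  have "u \<bullet> (A *v u) \<le> (x0 \<bullet> (A *v x0)) * (u \<bullet> u)" if "u \<in> U" for u
  proof (cases "u = 0")
    case False
    then have "(1 / norm u) *\<^sub>R u \<in> S" using that assms(1) by (simp add: S_def subspace_scale)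
    from max[OF this] have "(1 / norm u)^2 * (u \<bullet> (A *v u)) \<le> x0 \<bullet> (A *v x0)"
      by (simp only: quadratic_form_scaleR)
    with False have "u \<bullet> (A *v u) \<le> (x0 \<bullet> (A *v x0)) * (norm u)^2"
      by (simp add: field_simps)
    then show ?thesis by (simp add: power2_norm_eq_inner)
  qed simp
  moreover have "x0 \<in> U" "norm x0 = 1" using x0 by (auto simp: S_def)
  ultimately show ?thesis using that by blast
qed

text \<open>The same for the minimum, by passing to \<open>- A\<close>.\<close>
lemma quadratic_form_min_on_subspace:
  fixes A :: "complex^'n::finite^'n"
  assumes "subspace U" "z \<in> U" "z \<noteq> 0"
  obtains x0 where "x0 \<in> U" "norm x0 = 1"
    "\<And>u. u \<in> U \<Longrightarrow> (x0 \<bullet> (A *v x0)) * (u \<bullet> u) \<le> u \<bullet> (A *v u)"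
proof -
  have neg: "(- A) *v u = - (A *v u)" for u
    by (simp add: matrix_vector_mult_def vec_eq_iff sum_negf)
  obtain x0 where "x0 \<in> U" "norm x0 = 1"
    "\<And>u. u \<in> U \<Longrightarrow> u \<bullet> ((- A) *v u) \<le> (x0 \<bullet> ((- A) *v x0)) * (u \<bullet> u)"
    using quadratic_form_max_on_subspace[OF assms] by blast
  then show ?thesis using that by (simp add: neg)
qed

text \<open>First-order condition for the maximum of the Rayleigh quotient: A x0 is orthogonal
  (within U) to every vector orthogonal to x0.\<close>
lemma rayleigh_max_orthogonal:
  fixes A :: "complex^'n::finite^'n"
  assumes "psd A" "subspace U" "x0 \<in> U" "norm x0 = 1"
    and max: "\<And>u. u \<in> U \<Longrightarrow> u \<bullet> (A *v u) \<le> (x0 \<bullet> (A *v x0)) * (u \<bullet> u)"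
    and "y \<in> U" "y \<bullet> x0 = 0"
  shows "y \<bullet> (A *v x0) = 0"
proof -
  let ?\<mu> = "x0 \<bullet> (A *v x0)"
  have "- (y \<bullet> (A *v x0)) = 0"
  proof (rule nonneg_quadratic_imp_linear_coeff_zero)
    show "0 \<le> ?\<mu> * (y \<bullet> y) - y \<bullet> (A *v y)" using max[OF assms(6)] by simp
    fix t
    have "x0 + t *\<^sub>R y \<in> U" using assms(2,3,6) by (simp add: subspace_add subspace_scale)
    have "x0 \<bullet> x0 = 1" using assms(4) by (metis power2_norm_eq_inner one_power2)
    then have sq: "(x0 + t *\<^sub>R y) \<bullet> (x0 + t *\<^sub>R y) = 1 + t^2 * (y \<bullet> y)"
      using assms(7) by (simp add: inner_add_left inner_add_right inner_commute[of x0 y] power2_eq_square)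
    from max[OF \<open>x0 + t *\<^sub>R y \<in> U\<close>]
    have "?\<mu> + 2*t*(y \<bullet> (A *v x0)) + t^2 * (y \<bullet> (A *v y)) \<le> ?\<mu> * (1 + t^2 * (y \<bullet> y))"
      by (simp only: psd_quadratic_expand[OF assms(1)] sq)
    then show "0 \<le> 2*t*(- (y \<bullet> (A *v x0))) + t^2 * (?\<mu> * (y \<bullet> y) - y \<bullet> (A *v y))"
      by (simp add: algebra_simps)
  qed
  then show ?thesis by simp
qed

text \<open>A psd matrix that does not vanish on an invariant subspace has an eigenvector with a
  positive eigenvalue in it: the maximiser of the Rayleigh quotient.\<close>
lemma psd_eigenvector_in_invariant_subspace:
  assumes "psd A" "subspace U" "(*v) A ` U \<subseteq> U" "z \<in> U" "A *v z \<noteq> 0"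
  obtains x0 \<mu> where "x0 \<in> U" "x0 \<noteq> 0" "\<mu> > 0" "A *v x0 = \<mu> *\<^sub>R x0"
proof -
  have "z \<noteq> 0" using assms(5) by auto
  then obtain x0 where x0: "x0 \<in> U" "norm x0 = 1"
    and max: "\<And>u. u \<in> U \<Longrightarrow> u \<bullet> (A *v u) \<le> (x0 \<bullet> (A *v x0)) * (u \<bullet> u)"
    using quadratic_form_max_on_subspace[OF assms(2,4)] by blast
  define \<mu> where "\<mu> = x0 \<bullet> (A *v x0)"
  have "0 < z \<bullet> (A *v z)"
    using assms(1,5) psd_form_zero_imp_kernel[OF assms(1)] by (force simp: psd_iff_inner order_less_le)
  also have "\<dots> \<le> \<mu> * (z \<bullet> z)" using max[OF assms(4)] by (simp add: \<mu>_def)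
  finally have "\<mu> > 0" using inner_ge_zero[of z] by (auto simp: zero_less_mult_iff)
  define w where "w = A *v x0 - \<mu> *\<^sub>R x0"
  have "w \<in> U" unfolding w_def using x0(1) assms(2,3)
    by (intro subspace_diff subspace_scale) auto
  moreover have "w \<bullet> x0 = 0"
    using psd_self_adjoint[OF assms(1), of x0 x0] x0(2)
    by (simp add: w_def \<mu>_def inner_diff_left power2_norm_eq_inner[symmetric])
  ultimately have "w \<bullet> (A *v x0) = 0"
    using rayleigh_max_orthogonal[OF assms(1,2) x0 max] by blast
  with \<open>w \<bullet> x0 = 0\<close> have "w \<bullet> w = 0" by (simp add: w_def inner_diff_right)
  then have "A *v x0 = \<mu> *\<^sub>R x0" by (simp add: w_def)
  moreover have "x0 \<noteq> 0" using x0(2) by auto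
  ultimately show ?thesis using that x0(1) \<open>\<mu> > 0\<close> by blast
qed

definition eigvecs_nonzero :: "complex^'n::finite^'n \<Rightarrow> (complex^'n) set" where
  "eigvecs_nonzero X = {v. v \<noteq> 0 \<and> (\<exists>c. c \<noteq> 0 \<and> X *v v = c *s v)}"

lemma cspan_eq_span: "cspan S = vec.span S"
  unfolding cspan_def vec.span_explicit by auto

lemma supp_eq_span: "supp X = vec.span (eigvecs_nonzero X)"
  by (simp add: supp_def eigvecs_nonzero_def cspan_eq_span)

lemma supp_subset_range: "supp X \<subseteq> range ((*v) X)"
proof -
  have "eigvecs_nonzero X \<subseteq> range ((*v) X)"
  proof
    fix v assume "v \<in> eigvecs_nonzero X"
    then obtain c where "c \<noteq> 0" "X *v v = c *s v" by (auto simp: eigvecs_nonzero_def)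
    then have "X *v (inverse c *s v) = v" by (simp add: matrix_vector_mult_cscale)
    then show "v \<in> range ((*v) X)" by (metis rangeI)
  qed
  moreover have "vec.subspace (range ((*v) X))"
    by (intro vec.subspace_image vec.subspace_UNIV)
  ultimately show ?thesis unfolding supp_eq_span by (rule vec.span_minimal)
qed

lemma supp_invariant: "w \<in> supp X \<Longrightarrow> X *v w \<in> supp X"
proof -
  have "(*v) X ` eigvecs_nonzero X \<subseteq> vec.span (eigvecs_nonzero X)"
    by (auto simp: eigvecs_nonzero_def vec.span_scale vec.span_base)
  then have "vec.span ((*v) X ` eigvecs_nonzero X) \<subseteq> vec.span (eigvecs_nonzero X)"
    by (simp add: vec.span_minimal)
  then have "(*v) X ` vec.span (eigvecs_nonzero X) \<subseteq> vec.span (eigvecs_nonzero X)"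
    by (simp add: vec.span_image)
  then show "w \<in> supp X \<Longrightarrow> X *v w \<in> supp X" by (auto simp: supp_eq_span)
qed

text \<open>A psd matrix vanishes on the orthogonal complement of its support: otherwise that
  (invariant) complement would contain a further eigenvector with nonzero eigenvalue.\<close>
lemma psd_kills_orthogonal_supp:
  assumes "psd X" "z \<in> (supp X)\<^sup>\<bottom>"
  shows "X *v z = 0"
proof (rule ccontr)
  let ?U = "(supp X)\<^sup>\<bottom>"
  have "(*v) X ` ?U \<subseteq> ?U"
    using psd_self_adjoint[OF assms(1)] supp_invariant
    by (fastforce simp: orthogonal_comp_def orthogonal_def)
  moreover assume "X *v z \<noteq> 0"
  ultimately obtain x0 \<mu> where x0: "x0 \<in> ?U" "x0 \<noteq> 0" "\<mu> > 0" "X *v x0 = \<mu> *\<^sub>R x0"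
    using psd_eigenvector_in_invariant_subspace[OF assms(1) subspace_orthogonal_comp _ assms(2)] by blast
  then have "x0 \<in> supp X"
    by (auto simp: supp_eq_span eigvecs_nonzero_def scaleR_eq_cscale intro!: vec.span_base)
  with x0(1,2) show False by (auto simp: orthogonal_comp_def orthogonal_def)
qed

lemma supp_psd_eq_range:
  assumes "psd X"
  shows "supp X = range ((*v) X)"
proof
  show "supp X \<subseteq> range ((*v) X)" by (rule supp_subset_range)
  show "range ((*v) X) \<subseteq> supp X"
  proof
    fix y assume "y \<in> range ((*v) X)"
    then obtain x where x: "y = X *v x" by auto
    have sW: "subspace (supp X)"
      by (simp add: supp_eq_span vec_subspace_imp_subspace)
    obtain a b where "a \<in> span (supp X)" "\<And>w. w \<in> span (supp X) \<Longrightarrow> orthogonal b w" "x = a + b"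
      using orthogonal_subspace_decomp_exists[of "supp X" x] by blast
    moreover from this have "b \<in> (supp X)\<^sup>\<bottom>"
      using span_superset by (auto simp: orthogonal_comp_def orthogonal_def inner_commute)
    ultimately have "a \<in> supp X" "y = X *v a"
      using sW psd_kills_orthogonal_supp[OF assms] x
      by (auto simp: span_eq_iff[THEN iffD2] matrix_vector_right_distrib)
    then show "y \<in> supp X" by (simp add: supp_invariant)
  qed
qed

lemma supp_psd_eq_orthogonal_nullspace: "psd X \<Longrightarrow> supp X = (nullspace X)\<^sup>\<bottom>"
  using supp_psd_eq_range range_psd_eq_orthogonal_nullspace by blast

lemma psd_form_upper_bound:
  fixes A :: "complex^'n::finite^'n"
  assumes "psd A"
  obtains M where "M \<ge> 0" "\<And>x. x \<bullet> (A *v x) \<le> M * (x \<bullet> x)"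
proof -
  fix i :: 'n
  obtain x0 where "\<And>u. u \<bullet> (A *v u) \<le> (x0 \<bullet> (A *v x0)) * (u \<bullet> u)"
    using quadratic_form_max_on_subspace[OF subspace_UNIV UNIV_I, of "axis i 1" A]
    by (auto simp: axis_eq_0_iff)
  moreover have "x0 \<bullet> (A *v x0) \<ge> 0" using assms by (simp add: psd_iff_inner)
  ultimately show ?thesis using that by blast
qed

lemma psd_form_coercive:
  fixes A :: "complex^'n::finite^'n"
  assumes "psd A"
  obtains m where "m > 0" "\<And>p. p \<in> (nullspace A)\<^sup>\<bottom> \<Longrightarrow> m * (p \<bullet> p) \<le> p \<bullet> (A *v p)"
proof (cases "\<exists>z \<in> (nullspace A)\<^sup>\<bottom>. z \<noteq> 0")
  case True
  then obtain z where "z \<in> (nullspace A)\<^sup>\<bottom>" "z \<noteq> 0" by blast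
  then obtain x1 where x1: "x1 \<in> (nullspace A)\<^sup>\<bottom>" "norm x1 = 1"
    and min: "\<And>u. u \<in> (nullspace A)\<^sup>\<bottom> \<Longrightarrow> (x1 \<bullet> (A *v x1)) * (u \<bullet> u) \<le> u \<bullet> (A *v u)"
    using quadratic_form_min_on_subspace[OF subspace_orthogonal_comp] by blast
  have "x1 \<notin> nullspace A"
    using x1 by (auto simp: orthogonal_comp_def orthogonal_def)
  then have "x1 \<bullet> (A *v x1) \<noteq> 0"
    using psd_form_zero_imp_kernel[OF assms] by (auto simp: nullspace_def)
  moreover have "x1 \<bullet> (A *v x1) \<ge> 0" using assms by (simp add: psd_iff_inner)
  ultimately show ?thesis using that[of "x1 \<bullet> (A *v x1)"] min by simp
next
  case False
  then have "\<And>p. p \<in> (nullspace A)\<^sup>\<bottom> \<Longrightarrow> 1 * (p \<bullet> p) \<le> p \<bullet> (A *v p)" by auto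
  then show ?thesis using that[of 1] by simp
qed

lemma psd_dominated:
  assumes "psd \<sigma>" "psd \<tau>" "nullspace \<tau> \<subseteq> nullspace \<sigma>"
  obtains c where "\<And>x. x \<bullet> (\<sigma> *v x) \<le> c * (x \<bullet> (\<tau> *v x))"
proof -
  obtain M where M: "M \<ge> 0" "\<And>x. x \<bullet> (\<sigma> *v x) \<le> M * (x \<bullet> x)"
    using psd_form_upper_bound[OF assms(1)] by blast
  obtain m where m: "m > 0" "\<And>p. p \<in> (nullspace \<tau>)\<^sup>\<bottom> \<Longrightarrow> m * (p \<bullet> p) \<le> p \<bullet> (\<tau> *v p)"
    using psd_form_coercive[OF assms(2)] by blast
  have "x \<bullet> (\<sigma> *v x) \<le> M / m * (x \<bullet> (\<tau> *v x))" for x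
  proof -
    have sK: "subspace (nullspace \<tau>)" by (rule vec_subspace_imp_subspace[OF nullspace_subspace])
    obtain a p where a: "a \<in> span (nullspace \<tau>)" and p: "\<And>w. w \<in> span (nullspace \<tau>) \<Longrightarrow> orthogonal p w"
      and x: "x = a + p"
      using orthogonal_subspace_decomp_exists[of "nullspace \<tau>" x] by blast
    have "p \<in> (nullspace \<tau>)\<^sup>\<bottom>"
      using p span_superset by (auto simp: orthogonal_comp_def orthogonal_def inner_commute)
    have "a \<in> nullspace \<tau>" using a sK by (simp add: span_eq_iff[THEN iffD2])
    then have "\<tau> *v a = 0" "\<sigma> *v a = 0" using assms(3) by (auto simp: nullspace_def)
    then have forms: "x \<bullet> (\<tau> *v x) = p \<bullet> (\<tau> *v p)" "x \<bullet> (\<sigma> *v x) = p \<bullet> (\<sigma> *v p)"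
      using psd_self_adjoint[OF assms(1), of a p] psd_self_adjoint[OF assms(2), of a p]
      by (simp_all add: x matrix_vector_right_distrib inner_add_left)
    have "p \<bullet> (\<sigma> *v p) \<le> M / m * (m * (p \<bullet> p))" using M(2)[of p] m(1) by simp
    also have "\<dots> \<le> M / m * (p \<bullet> (\<tau> *v p))"
      using m \<open>p \<in> (nullspace \<tau>)\<^sup>\<bottom>\<close> M(1) by (intro mult_left_mono) auto
    finally show ?thesis by (simp add: forms)
  qed
  then show ?thesis by (rule that)
qed

definition positive_map :: "('n::finite qop \<Rightarrow> 'n qop) \<Rightarrow> bool" where
  "positive_map \<Phi> \<longleftrightarrow> (\<forall>A B. \<Phi> (A + B) = \<Phi> A + \<Phi> B) \<and> (\<forall>c A. \<Phi> (msc c A) = msc c (\<Phi> A))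
     \<and> (\<forall>A. psd A \<longrightarrow> psd (\<Phi> A))"

lemma msc_of_real_mult: "msc (complex_of_real c) A *v x = c *\<^sub>R (A *v x)"
  by (simp add: msc_def matrix_vector_mult_def vec_eq_iff scaleR_conv_of_real[where 'a=complex]
      sum_distrib_left algebra_simps)

text \<open>Positive maps preserve inclusions between null spaces of psd operators: apply the map
  to the psd difference c \<tau> - \<sigma>.\<close>
lemma positive_map_nullspace_mono:
  assumes "positive_map \<Phi>" "psd \<sigma>" "psd \<tau>" "nullspace \<tau> \<subseteq> nullspace \<sigma>"
  shows "nullspace (\<Phi> \<tau>) \<subseteq> nullspace (\<Phi> \<sigma>)"
proof
  obtain c where c: "\<And>x. x \<bullet> (\<sigma> *v x) \<le> c * (x \<bullet> (\<tau> *v x))"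
    using psd_dominated[OF assms(2-4)] by blast
  define D where "D = msc (complex_of_real c) \<tau> - \<sigma>"
  have "psd D"
    using assms(2,3) c by (simp add: psd_iff_inner D_def matrix_vector_mult_diff_rdistrib
        msc_of_real_mult inner_diff_right)
  then have "psd (\<Phi> D)" using assms(1) by (simp add: positive_map_def)
  have "\<Phi> D + \<Phi> \<sigma> = msc (complex_of_real c) (\<Phi> \<tau>)"
    using assms(1) unfolding positive_map_def D_def by (metis diff_add_cancel)
  then have \<Phi>D: "\<Phi> D = msc (complex_of_real c) (\<Phi> \<tau>) - \<Phi> \<sigma>" by (simp add: eq_diff_eq)
  fix v assume "v \<in> nullspace (\<Phi> \<tau>)"
  then have "v \<bullet> (\<Phi> D *v v) = - (v \<bullet> (\<Phi> \<sigma> *v v))"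
    by (simp add: nullspace_def \<Phi>D matrix_vector_mult_diff_rdistrib msc_of_real_mult inner_diff_right)
  moreover have "psd (\<Phi> \<sigma>)" using assms(1,2) by (simp add: positive_map_def)
  ultimately have "v \<bullet> (\<Phi> \<sigma> *v v) = 0"
    using \<open>psd (\<Phi> D)\<close> by (smt (verit) psd_iff_inner)
  then show "v \<in> nullspace (\<Phi> \<sigma>)"
    using psd_form_zero_imp_kernel \<open>psd (\<Phi> \<sigma>)\<close> by (simp add: nullspace_def)
qed

lemma positive_map_0: "positive_map \<Phi> \<Longrightarrow> \<Phi> 0 = 0"
  unfolding positive_map_def by (metis add_cancel_right_right add.right_neutral)

lemma positive_map_sum:
  assumes "positive_map \<Phi>" "finite I"
  shows "\<Phi> (\<Sum>i\<in>I. X i) = (\<Sum>i\<in>I. \<Phi> (X i))"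
  using assms(2) by (induction I rule: finite_induct)
    (use assms(1) positive_map_0 in \<open>auto simp: positive_map_def\<close>)

lemma msc_sum: "finite K \<Longrightarrow> msc c (\<Sum>k\<in>K. A k) = (\<Sum>k\<in>K. msc c (A k::'n::finite qop))"
  by (induction K rule: finite_induct) (auto simp: msc_def vec_eq_iff algebra_simps)

lemma positive_map_sum_maps:
  assumes "finite K" "\<And>k. k \<in> K \<Longrightarrow> positive_map (\<Phi> k)"
  shows "positive_map (\<lambda>X. \<Sum>k\<in>K. \<Phi> k X)"
  using assms unfolding positive_map_def
  by (auto simp: sum.distrib msc_sum intro!: psd_sum)

lemma adj_inner: "v \<bullet> ((M::complex^'n::finite^'n) *v w) = (adj M *v v) \<bullet> w"
proof -
  have inner_sum: "(x::complex^'n) \<bullet> y = Re (\<Sum>i\<in>UNIV. cnj (x$i) * y$i)" for x y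
    by (simp add: inner_vec_def inner_complex_def Re_sum)
  have "(\<Sum>i\<in>UNIV. cnj (v$i) * (M *v w)$i) = (\<Sum>i\<in>UNIV. \<Sum>j\<in>UNIV. cnj (v$i) * M$i$j * w$j)"
    by (simp add: matrix_vector_mult_def sum_distrib_left mult.assoc)
  also have "\<dots> = (\<Sum>j\<in>UNIV. \<Sum>i\<in>UNIV. cnj (v$i) * M$i$j * w$j)"
    by (rule sum.swap)
  also have "\<dots> = (\<Sum>i\<in>UNIV. cnj ((adj M *v v)$i) * w$i)"
    by (simp add: matrix_vector_mult_def adj_def cnj_sum sum_distrib_right sum_distrib_left mult_ac)
  finally show ?thesis by (simp only: inner_sum)
qed

lemma psd_congruence:
  assumes "psd A"
  shows "psd (M ** A ** adj M)"
  unfolding psd_iff_inner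
proof
  fix v
  have Mv: "(M ** A ** adj M) *v v = M *v (A *v (adj M *v v))"
    by (simp add: matrix_vector_mul_assoc matrix_mul_assoc)
  have "iscale v \<bullet> ((M ** A ** adj M) *v v) = iscale (adj M *v v) \<bullet> (A *v (adj M *v v))"
    by (simp add: Mv adj_inner matrix_vector_mult_cscale)
  moreover have "v \<bullet> ((M ** A ** adj M) *v v) = (adj M *v v) \<bullet> (A *v (adj M *v v))"
    by (simp add: Mv adj_inner)
  ultimately show "iscale v \<bullet> ((M ** A ** adj M) *v v) = 0 \<and> 0 \<le> v \<bullet> ((M ** A ** adj M) *v v)"
    using assms by (simp add: psd_iff_inner)
qed

lemma block_psd_1: "block_psd 1 (\<lambda>i j. X) \<longleftrightarrow> psd X"
proof -
  have one: "{..<1::nat} = {0}" by auto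
  show ?thesis
  proof
    assume block: "block_psd 1 (\<lambda>i j. X)"
    show "psd X" unfolding psd_def
    proof
      fix w
      show "Im (qform X w) = 0 \<and> 0 \<le> Re (qform X w)"
        using block[unfolded block_psd_def, THEN spec[of _ "\<lambda>_. w"]]
        by (simp add: one qform_def Let_def)
    qed
  next
    assume "psd X"
    then show "block_psd 1 (\<lambda>i j. X)" unfolding block_psd_def psd_def qform_def Let_def one
      by simp
  qed
qed

lemma completely_positive_imp_positive: "completely_positive \<Phi> \<Longrightarrow> psd A \<Longrightarrow> psd (\<Phi> A)"
  unfolding completely_positive_def using block_psd_1 by blast

lemma positive_map_Fk:
  assumes "super_operator (E k)"
  shows "positive_map (Fk E M1 k)"
proof -
  have "msc c A ** B = msc c (A ** B)" "A ** msc c B = msc c (A ** B)" for c and A B :: "'a::finite qop"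
    by (simp_all add: vec_eq_iff msc_def matrix_matrix_mult_def sum_distrib_left mult_ac)
  moreover have "(A + B) ** C = A ** C + B ** C" for A B C :: "'a qop"
    by (simp add: vec_eq_iff matrix_matrix_mult_def algebra_simps sum.distrib)
  ultimately show ?thesis
    using assms unfolding positive_map_def super_operator_def clinear_map_def Fk_def
    by (auto simp: matrix_add_ldistrib psd_congruence completely_positive_imp_positive)
qed

lemma positive_map_Fsum:
  "\<forall>k\<in>{1..m}. super_operator (E k) \<Longrightarrow> positive_map (Fsum m E M1)"
  unfolding Fsum_def[abs_def] by (intro positive_map_sum_maps positive_map_Fk) auto

lemma antitone_chain_stabilizes:
  fixes S :: "nat \<Rightarrow> ('a::field^'n) set"
  assumes sub: "\<And>j. vec.subspace (S j)"
    and anti: "\<And>j. S (Suc j) \<subseteq> S j"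
    and stable: "\<And>j. S (Suc j) = S j \<Longrightarrow> S (Suc (Suc j)) = S (Suc j)"
    and dim: "vec.dim (S 0) \<le> n"
  shows "S n \<subseteq> S j"
proof -
  have stays: "S j = S j0 \<and> S (Suc j) = S j" if "S (Suc j0) = S j0" "j0 \<le> j" for j0 j
    using that(2) by (induction j rule: dec_induct) (use that(1) stable in auto)
  have "\<exists>j0\<le>n. S (Suc j0) = S j0"
  proof (rule ccontr)
    assume "\<not> ?thesis"
    then have strict: "S (Suc j) \<subset> S j" if "j \<le> n" for j
      using that anti[of j] by blast
    have "vec.dim (S j) + j \<le> vec.dim (S 0)" if "j \<le> Suc n" for j
      using that
    proof (induction j)
      case (Suc j)
      have "vec.span (S (Suc j)) \<subset> vec.span (S j)"
        using strict[of j] Suc.prems by (simp add: sub vec.span_eq_iff[THEN iffD2])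
      then have "vec.dim (S (Suc j)) < vec.dim (S j)" by (rule vec.dim_psubset)
      then show ?case using Suc by simp
    qed simp
    from this[of "Suc n"] dim show False by simp
  qed
  then obtain j0 where j0: "j0 \<le> n" "S (Suc j0) = S j0" by blast
  show ?thesis
  proof (cases "j \<le> n")
    case True
    then show ?thesis using lift_Suc_antimono_le[of S] anti by blast
  next
    case False
    then show ?thesis using stays[OF j0(2), of j] stays[OF j0(2), of n] j0(1) by simp
  qed
qed

lemma nullspace_nonzero_dim:
  fixes X :: "'n::finite qop"
  assumes "X \<noteq> 0"
  shows "vec.dim (nullspace X) < CARD('n)"
proof -
  have "nullspace X \<noteq> UNIV"
    using assms matrix_eq[of X 0] by (auto simp: nullspace_def)
  moreover have "nullspace X = UNIV" if "vec.dim (nullspace X) = vec.dim (UNIV :: (complex^'n) set)"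
    using that by (intro vec.subspace_dim_equal nullspace_subspace vec.subspace_UNIV) auto
  ultimately have "vec.dim (nullspace X) \<noteq> vec.dim (UNIV :: (complex^'n) set)" by blast
  moreover have "vec.dim (nullspace X) \<le> vec.dim (UNIV :: (complex^'n) set)"
    by (rule vec.dim_subset) simp
  ultimately show ?thesis by (metis vec_dim_card le_neq_implies_less)
qed

lemma Fstr_snoc: "Fstr E M1 (f @ [k]) \<rho> = Fk E M1 k (Fstr E M1 f \<rho>)"
  by (simp add: Fstr_def)

inductive_set word_sums for E :: "nat \<Rightarrow> 'n::finite qop \<Rightarrow> 'n qop" and M1 m \<rho>0 where
  zero: "0 \<in> word_sums E M1 m \<rho>0"
| add_word: "X \<in> word_sums E M1 m \<rho>0 \<Longrightarrow> f \<in> lists {1..m} \<Longrightarrow>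
    X + Fstr E M1 f \<rho>0 \<in> word_sums E M1 m \<rho>0"

context
  fixes m :: nat and E :: "nat \<Rightarrow> 'n::finite qop \<Rightarrow> 'n qop" and M1 \<rho>0 :: "'n qop"
  assumes super: "\<forall>k\<in>{1..m}. super_operator (E k)" and psd_rho0: "psd \<rho>0"
begin

abbreviation F :: "'n qop \<Rightarrow> 'n qop" where "F \<equiv> Fsum m E M1"

lemma positive_F: "positive_map F"
  using super by (rule positive_map_Fsum)

lemma positive_Fk: "k \<in> {1..m} \<Longrightarrow> positive_map (Fk E M1 k)"
  using super positive_map_Fk by blast

lemma psd_F_power: "psd ((F ^^ i) \<rho>0)"
  by (induction i) (use psd_rho0 positive_F in \<open>auto simp: positive_map_def\<close>)

lemma psd_Fstr: "f \<in> lists {1..m} \<Longrightarrow> psd (Fstr E M1 f \<rho>0)"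
  by (induction f rule: rev_induct)
    (use psd_rho0 positive_Fk in \<open>auto simp: Fstr_def positive_map_def\<close>)

definition partial_sum :: "nat \<Rightarrow> 'n qop" where
  "partial_sum j = (\<Sum>i<Suc j. (F ^^ i) \<rho>0)"

lemma partial_sum_0: "partial_sum 0 = \<rho>0"
  by (simp add: partial_sum_def)

lemma partial_sum_last: "partial_sum (CARD('n) - 1) = (\<Sum>i<CARD('n). (F ^^ i) \<rho>0)"
  by (simp add: partial_sum_def)

lemma psd_partial_sum: "psd (partial_sum j)"
  unfolding partial_sum_def by (intro psd_sum psd_F_power) auto

lemma partial_sum_Suc: "partial_sum (Suc j) = \<rho>0 + F (partial_sum j)"
proof -
  have "partial_sum (Suc j) = (F ^^ 0) \<rho>0 + (\<Sum>i<Suc j. F ((F ^^ i) \<rho>0))"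
    unfolding partial_sum_def by (simp only: sum.lessThan_Suc_shift funpow.simps comp_def)
  also have "(\<Sum>i<Suc j. F ((F ^^ i) \<rho>0)) = F (partial_sum j)"
    unfolding partial_sum_def by (rule positive_map_sum[OF positive_F finite_lessThan, symmetric])
  finally show ?thesis by simp
qed

lemma nullspace_partial_sum_Suc:
  "nullspace (partial_sum (Suc j)) = nullspace \<rho>0 \<inter> nullspace (F (partial_sum j))"
  unfolding partial_sum_Suc using psd_rho0 psd_partial_sum positive_F
  by (intro nullspace_psd_add) (auto simp: positive_map_def)

lemma nullspace_partial_sum_antitone: "nullspace (partial_sum (Suc j)) \<subseteq> nullspace (partial_sum j)"
proof (induction j)
  case 0
  then show ?case by (simp add: nullspace_partial_sum_Suc partial_sum_0)
next
  case (Suc j)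
  then have "nullspace (F (partial_sum (Suc j))) \<subseteq> nullspace (F (partial_sum j))"
    by (rule positive_map_nullspace_mono[OF positive_F psd_partial_sum psd_partial_sum])
  then show ?case by (auto simp: nullspace_partial_sum_Suc)
qed

lemma nullspace_partial_sum_stable:
  assumes "nullspace (partial_sum (Suc j)) = nullspace (partial_sum j)"
  shows "nullspace (partial_sum (Suc (Suc j))) = nullspace (partial_sum (Suc j))"
proof -
  have "nullspace (F (partial_sum j)) \<subseteq> nullspace (F (partial_sum (Suc j)))"
    by (rule positive_map_nullspace_mono[OF positive_F psd_partial_sum psd_partial_sum]) (simp add: assms)
  then have "nullspace (partial_sum (Suc j)) \<subseteq> nullspace (partial_sum (Suc (Suc j)))"
    unfolding nullspace_partial_sum_Suc[of j] nullspace_partial_sum_Suc[of "Suc j"] by blast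
  with nullspace_partial_sum_antitone[of "Suc j"] show ?thesis by blast
qed

lemma nullspace_F_subset_Fk:
  "k \<in> {1..m} \<Longrightarrow> psd Y \<Longrightarrow> nullspace (F Y) \<subseteq> nullspace (Fk E M1 k Y)"
  unfolding Fsum_def using positive_Fk
  by (intro nullspace_psd_sum_subset) (auto simp: positive_map_def)

lemma nullspace_F_power_subset_word:
  "f \<in> lists {1..m} \<Longrightarrow> nullspace ((F ^^ length f) \<rho>0) \<subseteq> nullspace (Fstr E M1 f \<rho>0)"
proof (induction f rule: rev_induct)
  case Nil
  then show ?case by (simp add: Fstr_def)
next
  case (snoc k f)
  then have k: "k \<in> {1..m}" and f: "f \<in> lists {1..m}" by auto
  have "nullspace ((F ^^ length (f @ [k])) \<rho>0) = nullspace (F ((F ^^ length f) \<rho>0))" by simp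
  also have "\<dots> \<subseteq> nullspace (Fk E M1 k ((F ^^ length f) \<rho>0))"
    by (rule nullspace_F_subset_Fk[OF k psd_F_power])
  also have "\<dots> \<subseteq> nullspace (Fk E M1 k (Fstr E M1 f \<rho>0))"
    by (rule positive_map_nullspace_mono[OF positive_Fk[OF k] psd_Fstr[OF f] psd_F_power snoc.IH[OF f]])
  finally show ?case by (simp add: Fstr_snoc)
qed

lemma reachable_space_subset_supp_partial_sum:
  assumes "\<And>j. nullspace (partial_sum n) \<subseteq> nullspace (partial_sum j)"
  shows "reachable_space m E M1 \<rho>0 \<subseteq> supp (partial_sum n)"
proof -
  have "supp (Fstr E M1 f \<rho>0) \<subseteq> supp (partial_sum n)" if f: "f \<in> lists {1..m}" for f
  proof -
    have "nullspace (partial_sum n) \<subseteq> nullspace ((F ^^ length f) \<rho>0)"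
      using assms[of "length f"] unfolding partial_sum_def
      by (rule order_trans) (intro nullspace_psd_sum_subset psd_F_power; simp)
    also have "\<dots> \<subseteq> nullspace (Fstr E M1 f \<rho>0)" by (rule nullspace_F_power_subset_word[OF f])
    finally show ?thesis
      unfolding supp_psd_eq_orthogonal_nullspace[OF psd_partial_sum]
        supp_psd_eq_orthogonal_nullspace[OF psd_Fstr[OF f]]
      by (rule orthogonal_comp_anti_mono)
  qed
  then show ?thesis
    unfolding reachable_space_def cspan_eq_span
    by (intro vec.span_minimal) (auto simp: supp_eq_span)
qed

text \<open>Every partial sum is a sum of operators F_f(\<rho>0), so its range lies in the reachable space.\<close>
abbreviation W :: "'n qop set" where "W \<equiv> word_sums E M1 m \<rho>0"

lemma word_sums_add: "Y \<in> W \<Longrightarrow> X \<in> W \<Longrightarrow> X + Y \<in> W"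
proof (induction Y rule: word_sums.induct)
  case (add_word Y f)
  then have "X + Y + Fstr E M1 f \<rho>0 \<in> W" by (intro word_sums.add_word) auto
  then show ?case by (simp add: add.assoc)
qed simp

lemma word_sums_Fk: "X \<in> W \<Longrightarrow> k \<in> {1..m} \<Longrightarrow> Fk E M1 k X \<in> W"
proof (induction X rule: word_sums.induct)
  case zero
  then show ?case using positive_map_0[OF positive_Fk] word_sums.zero by simp
next
  case (add_word X f)
  then have "Fk E M1 k X + Fstr E M1 (f @ [k]) \<rho>0 \<in> W"
    by (intro word_sums.add_word) auto
  then show ?case
    using positive_Fk[OF add_word.prems] by (simp add: positive_map_def Fstr_snoc)
qed

lemma word_sums_sum: "finite K \<Longrightarrow> (\<And>k. k \<in> K \<Longrightarrow> A k \<in> W) \<Longrightarrow> (\<Sum>k\<in>K. A k) \<in> W"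
  by (induction K rule: finite_induct) (auto intro: word_sums.zero word_sums_add)

lemma partial_sum_in_word_sums: "partial_sum j \<in> W"
proof -
  have "\<rho>0 \<in> W"
    using word_sums.add_word[OF word_sums.zero, of "[]"] by (simp add: Fstr_def)
  moreover have "X \<in> W \<Longrightarrow> F X \<in> W" for X
    unfolding Fsum_def by (intro word_sums_sum word_sums_Fk) auto
  ultimately have "(F ^^ i) \<rho>0 \<in> W" for i by (induction i) auto
  then show ?thesis unfolding partial_sum_def by (intro word_sums_sum) auto
qed

lemma word_sums_range: "X \<in> W \<Longrightarrow> range ((*v) X) \<subseteq> reachable_space m E M1 \<rho>0"
proof (induction X rule: word_sums.induct)
  case zero
  then show ?case by (auto simp: reachable_space_def cspan_eq_span vec.span_zero)
next
  case (add_word X f)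
  have "Fstr E M1 f \<rho>0 *v v \<in> reachable_space m E M1 \<rho>0" for v
    using supp_psd_eq_range[OF psd_Fstr[OF add_word(2)]] add_word(2)
    unfolding reachable_space_def cspan_eq_span by (blast intro: vec.span_base)
  with add_word.IH show ?case
    unfolding reachable_space_def cspan_eq_span
    by (auto simp: matrix_vector_mult_add_rdistrib intro: vec.span_add)
qed

lemma supp_partial_sum_subset_reachable_space:
  "supp (partial_sum n) \<subseteq> reachable_space m E M1 \<rho>0"
  using supp_psd_eq_range[OF psd_partial_sum] word_sums_range[OF partial_sum_in_word_sums] by simp

end

text \<open>The null-space chain of the partial sums stabilises by index d - 1, and the two inclusions
  established above then give the equality.\<close>
theorem mainTheorem1:
  fixes m :: nat
    and E :: "nat \<Rightarrow> 'n::finite qop \<Rightarrow> 'n qop"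
    and M0 M1 \<rho>0 :: "'n qop"
  assumes "\<forall>k\<in>{1..m}. super_operator (E k) \<and> trace_preserving (E k)"
    and "adj M0 ** M0 + adj M1 ** M1 = mat 1"
    and "psd \<rho>0" and "tr \<rho>0 = 1"
  shows "reachable_space m E M1 \<rho>0 = supp (\<Sum>i<CARD('n). (Fsum m E M1 ^^ i) \<rho>0)"
proof -
  have super: "\<forall>k\<in>{1..m}. super_operator (E k)" using assms(1) by blast
  let ?T = "partial_sum m E M1 \<rho>0" and ?d = "CARD('n) - 1"
  have "\<rho>0 \<noteq> 0" using assms(4) by (auto simp: tr_def)
  then have "vec.dim (nullspace (?T 0)) \<le> ?d"
    using nullspace_nonzero_dim[of \<rho>0] by (simp add: partial_sum_0[OF super assms(3)])
  then have stable: "nullspace (?T ?d) \<subseteq> nullspace (?T j)" for j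
    using antitone_chain_stabilizes[of "\<lambda>j. nullspace (?T j)"] nullspace_subspace
      nullspace_partial_sum_antitone[OF super assms(3)] nullspace_partial_sum_stable[OF super assms(3)]
    by blast
  show ?thesis
    unfolding partial_sum_last[OF super assms(3), symmetric]
  proof
    show "reachable_space m E M1 \<rho>0 \<subseteq> supp (?T ?d)"
      by (rule reachable_space_subset_supp_partial_sum[OF super assms(3) stable])
    show "supp (?T ?d) \<subseteq> reachable_space m E M1 \<rho>0"
      by (rule supp_partial_sum_subset_reachable_space[OF super assms(3)])
  qed
qed

end
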